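(* Let $G$ be a graph on $d+2$ vertices that is representable in $\mathbb{R}^d$ with ratio $k$. Then $G$ has a spherical representation in $\mathbb{R}^d$ with ratio $k$ if and only if both of the following hold: (3) $\det(xJ + B_G(k))$ is the zero polynomial in $x$; (4) there exists $r_0 \in \mathbb{R}$ such that $rJ + B_G(k)$ is positive semidefinite for all $r \geq r_0$.
   Context: Graphs are finite and simple with vertices labeled $1,\dots,d+2$. A finite set $S\subset\mathbb{R}^d$ is a 2-distance set if $\{\|p-q\| : p,q\in S, p\neq q\}$ has exactly two elements $\alpha_1>\alpha_2$; its distance ratio is $k=\alpha_1/\alpha_2$; its associated graph has vertex set $S$ with $p,q$ adjacent iff $\|p-q\|=\alpha_1$. $G$ is representable in $\mathbb{R}^d$ with ratio $k$ if some 2-distance set in $\mathbb{R}^d$ with ratio $k$ has associated graph $G$; it has a spherical representation with ratio $k$ if such a set can be chosen on a $(d-1)$-dimensional sphere in $\mathbb{R}^d$. $B_G(k)$ is the $(d+2)\times(d+2)$ matrix with $b_{ii}=0$, $b_{ij}=-1$ for non-adjacent $i\neq j$, $b_{ij}=-k^2$ for adjacent $i,j$. $J$ is the all-ones matrix. *)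

theory Defs
  imports "HOL-Analysis.Euclidean_Space" "Jordan_Normal_Form.Determinant"
    "HOL-Computational_Algebra.Polynomial"
begin

text \<open>Graphs on the vertex set {0..<d+2} (vertex i here is vertex i+1 of the paper),
  given by a symmetric irreflexive adjacency relation E.\<close>

definition simple_graph_on :: "nat \<Rightarrow> (nat \<Rightarrow> nat \<Rightarrow> bool) \<Rightarrow> bool" where
  "simple_graph_on N E \<longleftrightarrow>
     (\<forall>i<N. \<not> E i i) \<and> (\<forall>i<N. \<forall>j<N. E i j \<longleftrightarrow> E j i)"

definition two_distance_rep ::
  "nat \<Rightarrow> (nat \<Rightarrow> nat \<Rightarrow> bool) \<Rightarrow> real \<Rightarrow> (nat \<Rightarrow> 'a::euclidean_space) \<Rightarrow> bool" where
  "two_distance_rep N E k p \<longleftrightarrow>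
     inj_on p {0..<N} \<and>
     (\<exists>a1 a2. a1 > a2 \<and>
        {dist (p i) (p j) | i j. i < N \<and> j < N \<and> i \<noteq> j} = {a1, a2} \<and>
        k = a1 / a2 \<and>
        (\<forall>i<N. \<forall>j<N. i \<noteq> j \<longrightarrow> (E i j \<longleftrightarrow> dist (p i) (p j) = a1)))"

text \<open>G is representable in the space 'a (= R^d with d = DIM('a)) with ratio k.\<close>
definition representable :: "'a::euclidean_space itself \<Rightarrow> nat \<Rightarrow> (nat \<Rightarrow> nat \<Rightarrow> bool) \<Rightarrow> real \<Rightarrow> bool" where
  "representable _ N E k \<longleftrightarrow> (\<exists>p::nat \<Rightarrow> 'a. two_distance_rep N E k p)"

definition spherical_representable :: "'a::euclidean_space itself \<Rightarrow> nat \<Rightarrow> (nat \<Rightarrow> nat \<Rightarrow> bool) \<Rightarrow> real \<Rightarrow> bool" where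
  "spherical_representable _ N E k \<longleftrightarrow>
     (\<exists>p::nat \<Rightarrow> 'a. two_distance_rep N E k p \<and>
        (\<exists>c \<rho>. \<rho> > 0 \<and> (\<forall>i<N. dist (p i) c = \<rho>)))"

definition B_mat :: "nat \<Rightarrow> (nat \<Rightarrow> nat \<Rightarrow> bool) \<Rightarrow> real \<Rightarrow> real mat" where
  "B_mat N E k = mat N N (\<lambda>(i,j). if i = j then 0 else if E i j then - (k^2) else -1)"

definition J_mat :: "nat \<Rightarrow> 'b::one mat" where
  "J_mat N = mat N N (\<lambda>_. 1)"

definition psd :: "real mat \<Rightarrow> bool" where
  "psd A \<longleftrightarrow> A \<in> carrier_mat (dim_row A) (dim_row A) \<and>
     (\<forall>v \<in> carrier_vec (dim_row A). v \<bullet> (A *\<^sub>v v) \<ge> 0)"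

end

theory Submission
  imports Defs "HOL-Analysis.Affine"
begin

text \<open>Rescale a representation so that its smaller distance is 1. Then \<open>B\<^sub>G(k) = - D\<close> for the
  matrix \<open>D\<close> of squared distances of the points \<open>q\<^sub>i\<close>, and the quadratic form of \<open>r J - D\<close> is
  \<open>r (\<Sum>v\<^sub>i)\<^sup>2 - 2 (\<Sum>v\<^sub>i) (\<Sum>v\<^sub>i \<parallel>q\<^sub>i\<parallel>\<^sup>2) + 2 \<parallel>\<Sum>v\<^sub>i q\<^sub>i\<parallel>\<^sup>2\<close>.
  If the \<open>q\<^sub>i\<close> lie on a sphere of radius \<open>\<sigma>\<close> about the origin, this is
  \<open>(r - 2\<sigma>\<^sup>2) (\<Sum>v\<^sub>i)\<^sup>2 + 2 \<parallel>\<Sum>v\<^sub>i q\<^sub>i\<parallel>\<^sup>2\<close>, so \<open>r J - D\<close> is positive semidefinite for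
  \<open>r \<ge> 2\<sigma>\<^sup>2\<close>; and an affine dependency \<open>w\<close> of the \<open>d + 2\<close> points lies in the kernel of every
  \<open>x J - D\<close>, so \<open>det (x J + B\<^sub>G(k))\<close> vanishes identically.

  Conversely, if \<open>r J - D\<close> is positive semidefinite for a single \<open>r\<close>, its form at \<open>w + t\<close> for an
  affine dependency \<open>w\<close> is a nonnegative quadratic in \<open>t\<close> with linear coefficient
  \<open>-2 (d + 2) \<Sum>w\<^sub>i \<parallel>q\<^sub>i\<parallel>\<^sup>2\<close>, which must therefore vanish. Hence \<open>(0, 0, 1)\<close> is not in the span of
  the lifted points \<open>(q\<^sub>i, 1, \<parallel>q\<^sub>i\<parallel>\<^sup>2)\<close>, and a vector \<open>(z\<^sub>1, z\<^sub>2, z\<^sub>3)\<close> orthogonal to them with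
  \<open>z\<^sub>3 \<noteq> 0\<close> is the equation of a sphere through all \<open>q\<^sub>i\<close>.\<close>

definition sqdist_mat :: "nat \<Rightarrow> (nat \<Rightarrow> 'a::metric_space) \<Rightarrow> real mat" where
  "sqdist_mat N q = mat N N (\<lambda>(i, j). (dist (q i) (q j))\<^sup>2)"

definition cospherical :: "nat \<Rightarrow> (nat \<Rightarrow> 'a::metric_space) \<Rightarrow> bool" where
  "cospherical N q \<longleftrightarrow> (\<exists>c \<rho>. \<rho> > 0 \<and> (\<forall>i<N. dist (q i) c = \<rho>))"

lemma spherical_representable_iff:
  "spherical_representable TYPE('a::euclidean_space) N E k \<longleftrightarrow>
     (\<exists>p::nat \<Rightarrow> 'a. two_distance_rep N E k p \<and> cospherical N p)"
  unfolding spherical_representable_def cospherical_def ..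

lemma cospherical_scaleR_iff:
  fixes q :: "nat \<Rightarrow> 'a::real_normed_vector"
  assumes "s \<noteq> 0"
  shows "cospherical N (\<lambda>i. s *\<^sub>R q i) \<longleftrightarrow> cospherical N q"
proof -
  have scaled: "cospherical N (\<lambda>i. t *\<^sub>R q' i)"
    if "cospherical N q'" "t \<noteq> 0" for t and q' :: "nat \<Rightarrow> 'a"
  proof -
    from that(1) obtain c \<rho> where "\<rho> > 0" "\<forall>i<N. dist (q' i) c = \<rho>"
      unfolding cospherical_def by blast
    moreover have "dist (t *\<^sub>R x) (t *\<^sub>R c) = \<bar>t\<bar> * dist x c" for x
      by (simp add: dist_norm flip: scaleR_diff_right)
    ultimately show ?thesis
      unfolding cospherical_def using that(2)
      by (intro exI[of _ "t *\<^sub>R c"] exI[of _ "\<bar>t\<bar> * \<rho>"]) auto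
  qed
  show ?thesis
    using scaled[of q s] scaled[of "\<lambda>i. s *\<^sub>R q i" "inverse s"] assms by auto
qed

lemma cospherical_if_equidistant:
  assumes "inj_on q {..<N}" "2 \<le> N" "\<forall>i<N. dist (q i) c = \<rho>"
  shows "cospherical N q"
proof -
  have "0 < dist (q 0) (q 1)"
    using inj_onD[OF assms(1), of 0 1] assms(2) by auto
  also have "\<dots> \<le> dist (q 0) c + dist (q 1) c"
    by (rule dist_triangle2)
  also have "\<dots> = 2 * \<rho>"
    using assms(2,3) by simp
  finally have "\<rho> > 0"
    by simp
  then show ?thesis
    unfolding cospherical_def using assms(3) by blast
qed

lemma two_distance_rep_normalized:
  assumes "two_distance_rep N E k p"
  obtains a where "a > 0" "inj_on (\<lambda>i. (1/a) *\<^sub>R p i) {..<N}"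
    "B_mat N E k = - sqdist_mat N (\<lambda>i. (1/a) *\<^sub>R p i)"
proof -
  from assms obtain a1 a where inj: "inj_on p {..<N}" and "a1 > a"
    and dists: "{dist (p i) (p j) | i j. i < N \<and> j < N \<and> i \<noteq> j} = {a1, a}"
    and k: "k = a1 / a"
    and adj: "\<forall>i<N. \<forall>j<N. i \<noteq> j \<longrightarrow> (E i j \<longleftrightarrow> dist (p i) (p j) = a1)"
    unfolding two_distance_rep_def by (auto simp: atLeast0LessThan)
  have "a \<in> {dist (p i) (p j) | i j. i < N \<and> j < N \<and> i \<noteq> j}"
    using dists by auto
  then have "a > 0"
    using inj by (auto simp: inj_on_def)
  have scaled_dist: "dist ((1/a) *\<^sub>R p i) ((1/a) *\<^sub>R p j) = dist (p i) (p j) / a" for i j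
    using \<open>a > 0\<close> by (simp add: dist_norm flip: scaleR_diff_right)
  have "B_mat N E k $$ (i, j) = - (dist (p i) (p j) / a)\<^sup>2" if "i < N" "j < N" for i j
  proof -
    consider "i = j" | "i \<noteq> j" "E i j" | "i \<noteq> j" "\<not> E i j"
      by blast
    then show ?thesis
    proof cases
      case 3
      then have "dist (p i) (p j) \<in> {a1, a} - {a1}"
        using that adj unfolding dists[symmetric] by blast
      then show ?thesis
        using that 3 \<open>a > 0\<close> by (simp add: B_mat_def)
    qed (use that adj k in \<open>auto simp: B_mat_def power_divide\<close>)
  qed
  then have "B_mat N E k = - sqdist_mat N (\<lambda>i. (1/a) *\<^sub>R p i)"
    by (intro eq_matI) (auto simp: B_mat_def sqdist_mat_def scaled_dist)
  moreover have "inj_on (\<lambda>i. (1/a) *\<^sub>R p i) {..<N}"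
    using inj \<open>a > 0\<close> by (auto simp: inj_on_def)
  ultimately show ?thesis
    using \<open>a > 0\<close> that by blast
qed

lemma quadratic_form_eq_double_sum:
  fixes A :: "'a::comm_semiring_0 mat"
  assumes "A \<in> carrier_mat N N" "v \<in> carrier_vec N"
  shows "scalar_prod v (A *\<^sub>v v) = (\<Sum>i<N. \<Sum>j<N. v $ i * v $ j * A $$ (i, j))"
  using assms
  by (auto simp: scalar_prod_def row_def sum_distrib_left mult_ac atLeast0LessThan
      intro!: sum.cong)

lemma double_sum_shift_sqdist:
  fixes q :: "nat \<Rightarrow> 'a::real_inner" and v :: "nat \<Rightarrow> real"
  shows "(\<Sum>i<N. \<Sum>j<N. v i * v j * (r - (dist (q i) (q j))\<^sup>2)) =
    r * (\<Sum>i<N. v i)\<^sup>2 - 2 * (\<Sum>i<N. v i) * (\<Sum>i<N. v i * (norm (q i))\<^sup>2)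
      + 2 * (norm (\<Sum>i<N. v i *\<^sub>R q i))\<^sup>2"
proof -
  define a where "a i = (norm (q i))\<^sup>2" for i
  have sq: "(dist (q i) (q j))\<^sup>2 = a i + a j - 2 * inner (q i) (q j)" for i j
    by (simp add: a_def dist_norm power2_norm_eq_inner inner_diff inner_commute)
  have gram: "(norm (\<Sum>i<N. v i *\<^sub>R q i))\<^sup>2 = (\<Sum>i<N. \<Sum>j<N. v i * v j * inner (q i) (q j))"
    by (simp add: power2_norm_eq_inner inner_sum_left inner_sum_right sum_distrib_left)
      (subst sum.swap, simp add: mult_ac)
  have const: "(\<Sum>i<N. \<Sum>j<N. v i * v j) = (\<Sum>i<N. v i)\<^sup>2"
    by (simp add: power2_eq_square sum_product)
  have left: "(\<Sum>i<N. \<Sum>j<N. v i * v j * a i) = (\<Sum>i<N. v i) * (\<Sum>i<N. v i * a i)"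
    by (subst sum.swap) (simp add: sum_product mult_ac)
  have right: "(\<Sum>i<N. \<Sum>j<N. v i * v j * a j) = (\<Sum>i<N. v i) * (\<Sum>i<N. v i * a i)"
    by (simp add: sum_product mult_ac)
  have "(\<Sum>i<N. \<Sum>j<N. v i * v j * (r - (dist (q i) (q j))\<^sup>2)) =
      r * (\<Sum>i<N. \<Sum>j<N. v i * v j) - (\<Sum>i<N. \<Sum>j<N. v i * v j * a i)
      - (\<Sum>i<N. \<Sum>j<N. v i * v j * a j) + 2 * (\<Sum>i<N. \<Sum>j<N. v i * v j * inner (q i) (q j))"
    unfolding sq by (simp add: algebra_simps sum.distrib sum_subtractf sum_distrib_left)
  then show ?thesis
    unfolding const left right gram a_def[symmetric] by simp
qed

lemma psd_shift_neg_sqdist_iff: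
  fixes q :: "nat \<Rightarrow> 'a::real_inner"
  shows "psd (smult_mat r (J_mat N) + - sqdist_mat N q) \<longleftrightarrow>
    (\<forall>v. 0 \<le> r * (\<Sum>i<N. v i)\<^sup>2 - 2 * (\<Sum>i<N. v i) * (\<Sum>i<N. v i * (norm (q i))\<^sup>2)
            + 2 * (norm (\<Sum>i<N. v i *\<^sub>R q i))\<^sup>2)"
proof -
  let ?M = "smult_mat r (J_mat N) + - sqdist_mat N q"
  have M: "?M \<in> carrier_mat N N"
    by (simp add: J_mat_def sqdist_mat_def)
  have carrier: "(\<forall>v\<in>carrier_vec N. P v) \<longleftrightarrow> (\<forall>f. P (vec N f))" for P
    by (metis (no_types, lifting) carrier_vecD eq_vecI dim_vec index_vec vec_carrier)
  have "scalar_prod (vec N v) (?M *\<^sub>v vec N v) =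
      (\<Sum>i<N. \<Sum>j<N. v i * v j * (r - (dist (q i) (q j))\<^sup>2))" for v
  proof -
    have "scalar_prod (vec N v) (?M *\<^sub>v vec N v) =
        (\<Sum>i<N. \<Sum>j<N. vec N v $ i * vec N v $ j * ?M $$ (i, j))"
      using M by (simp add: quadratic_form_eq_double_sum)
    also have "\<dots> = (\<Sum>i<N. \<Sum>j<N. v i * v j * (r - (dist (q i) (q j))\<^sup>2))"
      by (intro sum.cong refl) (simp add: J_mat_def sqdist_mat_def)
    finally show ?thesis .
  qed
  moreover have "psd ?M \<longleftrightarrow> (\<forall>v\<in>carrier_vec N. 0 \<le> scalar_prod v (?M *\<^sub>v v))"
    using M unfolding psd_def by (metis carrier_matD(1))
  ultimately show ?thesis
    by (simp add: carrier double_sum_shift_sqdist)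
qed

lemma det_pencil_eq_0_iff:
  fixes B :: "'a::{ring_char_0,idom} mat"
  assumes "B \<in> carrier_mat N N"
  shows "det (smult_mat [:0, 1:] (J_mat N) + map_mat (\<lambda>b. [:b:]) B) = 0 \<longleftrightarrow>
    (\<forall>x. det (smult_mat x (J_mat N) + B) = 0)"
proof -
  have "poly (det (smult_mat [:0, 1:] (J_mat N) + map_mat (\<lambda>b. [:b:]) B)) x =
      det (smult_mat x (J_mat N) + B)" for x
  proof -
    interpret eval: comm_ring_hom "\<lambda>p. poly p x"
      by unfold_locales auto
    have "map_mat (\<lambda>p. poly p x) (smult_mat [:0, 1:] (J_mat N) + map_mat (\<lambda>b. [:b:]) B) =
        smult_mat x (J_mat N) + B"
      using assms by (intro eq_matI) (auto simp: J_mat_def)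
    then show ?thesis
      by (metis eval.hom_det)
  qed
  then show ?thesis
    by (metis poly_all_0_iff_0)
qed

lemma affine_dependency_exists:
  fixes q :: "nat \<Rightarrow> 'a::euclidean_space"
  assumes "inj_on q {..<N}" "DIM('a) + 2 \<le> N"
  obtains w where "\<exists>i<N. w i \<noteq> 0" "(\<Sum>i<N. w i) = 0" "(\<Sum>i<N. w i *\<^sub>R q i) = 0"
proof -
  have "affine_dependent (q ` {..<N})"
    using assms by (intro affine_dependent_biggerset) (auto simp: card_image)
  then obtain u where "sum u (q ` {..<N}) = 0" "\<exists>v\<in>q ` {..<N}. u v \<noteq> 0"
    "(\<Sum>v\<in>q ` {..<N}. u v *\<^sub>R v) = 0"
    by (auto simp: affine_dependent_explicit_finite)
  then show ?thesis
    using assms(1) by (intro that[of "u \<circ> q"]) (auto simp: sum.reindex)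
qed

lemma psd_shift_neg_sqdist_if_on_sphere:
  fixes q :: "nat \<Rightarrow> 'a::real_inner"
  assumes "\<forall>i<N. dist (q i) c = \<sigma>" "2 * \<sigma>\<^sup>2 \<le> r"
  shows "psd (smult_mat r (J_mat N) + - sqdist_mat N q)"
proof -
  define q' where "q' i = q i - c" for i
  have "sqdist_mat N q' = sqdist_mat N q"
    by (simp add: sqdist_mat_def q'_def dist_norm)
  moreover have "(\<Sum>i<N. v i * (norm (q' i))\<^sup>2) = (\<Sum>i<N. v i) * \<sigma>\<^sup>2" for v
    using assms(1) by (simp add: q'_def dist_norm sum_distrib_right)
  moreover have "0 \<le> (r - 2 * \<sigma>\<^sup>2) * (\<Sum>i<N. v i)\<^sup>2 + 2 * (norm (\<Sum>i<N. v i *\<^sub>R q' i))\<^sup>2" for v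
    using assms(2) by simp
  ultimately show ?thesis
    using psd_shift_neg_sqdist_iff[of r N q'] by (simp add: algebra_simps power2_eq_square)
qed

lemma det_shift_neg_sqdist_eq_0_if_on_sphere:
  fixes q :: "nat \<Rightarrow> 'a::real_inner"
  assumes sphere: "\<forall>i<N. dist (q i) c = \<sigma>"
    and w: "\<exists>i<N. w i \<noteq> 0" "(\<Sum>i<N. w i) = 0" "(\<Sum>i<N. w i *\<^sub>R q i) = 0"
  shows "det (smult_mat x (J_mat N) + - sqdist_mat N q) = 0"
proof -
  let ?M = "smult_mat x (J_mat N) + - sqdist_mat N q"
  have M: "?M \<in> carrier_mat N N"
    by (simp add: J_mat_def sqdist_mat_def)
  have w_centered: "(\<Sum>j<N. w j *\<^sub>R (q j - c)) = 0"
    using w(2,3) by (simp add: scaleR_diff_right sum_subtractf flip: scaleR_sum_left)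
  have "?M *\<^sub>v vec N w = 0\<^sub>v N"
  proof (rule eq_vecI)
    fix i assume "i < dim_vec (0\<^sub>v N :: real vec)"
    then have i: "i < N" by simp
    have sq: "(dist (q i) (q j))\<^sup>2 = 2 * \<sigma>\<^sup>2 - 2 * inner (q i - c) (q j - c)" if "j < N" for j
    proof -
      have "(dist (q i) (q j))\<^sup>2 = (norm ((q i - c) - (q j - c)))\<^sup>2"
        by (simp add: dist_norm)
      also have "\<dots> = 2 * \<sigma>\<^sup>2 - 2 * inner (q i - c) (q j - c)"
        using dot_norm_neg[of "q i - c" "q j - c"] sphere i that by (auto simp: dist_norm)
      finally show ?thesis .
    qed
    have "(?M *\<^sub>v vec N w) $ i = (\<Sum>j<N. (x - (dist (q i) (q j))\<^sup>2) * w j)"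
      using i by (auto simp: J_mat_def sqdist_mat_def scalar_prod_def atLeast0LessThan intro!: sum.cong)
    also have "\<dots> = (\<Sum>j<N. (x - 2 * \<sigma>\<^sup>2) * w j + 2 * (w j * inner (q i - c) (q j - c)))"
      by (intro sum.cong refl) (simp add: sq algebra_simps del: inner_diff_left inner_diff_right)
    also have "\<dots> = (x - 2 * \<sigma>\<^sup>2) * (\<Sum>j<N. w j) + 2 * inner (q i - c) (\<Sum>j<N. w j *\<^sub>R (q j - c))"
      by (simp add: sum.distrib sum_distrib_left inner_sum_right)
    also have "\<dots> = 0"
      using w(2) w_centered by simp
    finally show "(?M *\<^sub>v vec N w) $ i = 0\<^sub>v N $ i"
      using i by simp
  qed (simp add: sqdist_mat_def)
  moreover have "vec N w \<noteq> 0\<^sub>v N"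
    using w(1) by (auto simp: vec_eq_iff)
  ultimately show ?thesis
    using det_0_iff_vec_prod_zero[OF M] vec_carrier by blast
qed

lemma pencil_conditions_if_cospherical:
  fixes q :: "nat \<Rightarrow> 'a::euclidean_space"
  assumes "inj_on q {..<N}" "DIM('a) + 2 \<le> N" "cospherical N q"
  shows "(\<forall>x. det (smult_mat x (J_mat N) + - sqdist_mat N q) = 0) \<and>
    (\<exists>r0. \<forall>r\<ge>r0. psd (smult_mat r (J_mat N) + - sqdist_mat N q))"
proof -
  obtain c \<sigma> where sphere: "\<forall>i<N. dist (q i) c = \<sigma>"
    using assms(3) unfolding cospherical_def by blast
  obtain w where "\<exists>i<N. w i \<noteq> 0" "(\<Sum>i<N. w i) = 0" "(\<Sum>i<N. w i *\<^sub>R q i) = 0"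
    using affine_dependency_exists[OF assms(1,2)] .
  then show ?thesis
    using det_shift_neg_sqdist_eq_0_if_on_sphere[OF sphere] psd_shift_neg_sqdist_if_on_sphere[OF sphere]
    by blast
qed

lemma linear_coeff_zero_if_quadratic_nonneg:
  fixes a b :: real
  assumes "\<And>t. 0 \<le> a * t\<^sup>2 + b * t"
  shows "b = 0"
proof (rule ccontr)
  assume "b \<noteq> 0"
  define D where "D = \<bar>a\<bar> + 1"
  have "D > 0" "a < 2 * D"
    by (auto simp: D_def)
  define t where "t = - b / (2 * D)"
  have "a * t\<^sup>2 + b * t = b\<^sup>2 * (a - 2 * D) / (4 * D\<^sup>2)"
    using \<open>D > 0\<close> by (simp add: t_def field_simps power2_eq_square)
  also have "\<dots> < 0"
    using \<open>b \<noteq> 0\<close> \<open>D > 0\<close> \<open>a < 2 * D\<close> by (intro divide_neg_pos mult_pos_neg) auto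
  finally show False
    using assms[of t] by linarith
qed

lemma affine_dependency_annihilates_sqnorm_if_psd:
  fixes q :: "nat \<Rightarrow> 'a::real_inner"
  assumes "psd (smult_mat r (J_mat N) + - sqdist_mat N q)" "0 < N"
    and w: "(\<Sum>i<N. w i) = 0" "(\<Sum>i<N. w i *\<^sub>R q i) = 0"
  shows "(\<Sum>i<N. w i * (norm (q i))\<^sup>2) = 0"
proof -
  define s where "s = (\<Sum>i<N. w i * (norm (q i))\<^sup>2)"
  define K where "K = r * (real N)\<^sup>2 - 2 * real N * (\<Sum>i<N. (norm (q i))\<^sup>2)
    + 2 * (norm (\<Sum>i<N. q i))\<^sup>2"
  have "0 \<le> K * t\<^sup>2 + (- 2 * real N * s) * t" for t
  proof -
    have "(\<Sum>i<N. w i + t) = real N * t"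
      using w(1) by (simp add: sum.distrib)
    moreover have "(\<Sum>i<N. (w i + t) * (norm (q i))\<^sup>2) = s + t * (\<Sum>i<N. (norm (q i))\<^sup>2)"
      by (simp add: s_def algebra_simps sum.distrib sum_distrib_left)
    moreover have "(\<Sum>i<N. (w i + t) *\<^sub>R q i) = t *\<^sub>R (\<Sum>i<N. q i)"
      using w(2) by (simp add: scaleR_add_left sum.distrib scaleR_sum_right)
    ultimately show ?thesis
      using assms(1) unfolding psd_shift_neg_sqdist_iff
      by (auto simp: K_def power2_eq_square algebra_simps dest: spec[of _ "\<lambda>i. w i + t"])
  qed
  then have "- 2 * real N * s = 0"
    by (rule linear_coeff_zero_if_quadratic_nonneg)
  then show ?thesis
    using assms(2) by (simp add: s_def)
qed

lemma orthogonal_witness_if_not_in_span: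
  fixes x :: "'a::euclidean_space"
  assumes "x \<notin> span S"
  obtains z where "\<And>y. y \<in> S \<Longrightarrow> inner z y = 0" "inner z x \<noteq> 0"
proof -
  obtain y z where y: "y \<in> span S" and z: "\<And>w. w \<in> span S \<Longrightarrow> orthogonal z w"
    and x: "x = y + z"
    using orthogonal_subspace_decomp_exists by blast
  have "z \<noteq> 0"
    using assms x y by auto
  moreover have "inner z x = inner z z"
    using z[OF y] x by (simp add: orthogonal_def inner_add_right)
  ultimately have "inner z x \<noteq> 0"
    by simp
  moreover have "inner z y = 0" if "y \<in> S" for y
    using z[OF span_base[OF that]] by (simp add: orthogonal_def)
  ultimately show ?thesis
    using that by blast
qed

lemma cospherical_if_affine_dependencies_annihilate_sqnorm:
  fixes q :: "nat \<Rightarrow> 'a::euclidean_space"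
  assumes inj: "inj_on q {..<N}" and "2 \<le> N"
    and annihilate: "\<And>w. (\<Sum>i<N. w i) = 0 \<Longrightarrow> (\<Sum>i<N. w i *\<^sub>R q i) = 0 \<Longrightarrow>
      (\<Sum>i<N. w i * (norm (q i))\<^sup>2) = 0"
  shows "cospherical N q"
proof -
  define h where "h i = (q i, 1::real, (norm (q i))\<^sup>2)" for i
  have inj_h: "inj_on h {..<N}"
    using inj by (auto simp: h_def inj_on_def)
  have "(0, 0, 1) \<notin> span (h ` {..<N})"
  proof
    assume "(0, 0, 1) \<in> span (h ` {..<N})"
    then obtain u where "(0, 0, 1) = (\<Sum>v\<in>h ` {..<N}. u v *\<^sub>R v)"
      by (auto simp: span_finite)
    then have u: "(0, 0, 1) = (\<Sum>i<N. u (h i) *\<^sub>R h i)"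
      by (simp add: sum.reindex[OF inj_h])
    have "(\<Sum>i<N. u (h i)) = 0" "(\<Sum>i<N. u (h i) *\<^sub>R q i) = 0"
      "(\<Sum>i<N. u (h i) * (norm (q i))\<^sup>2) = 1"
      using arg_cong[OF u, of fst] arg_cong[OF u, of "fst \<circ> snd"] arg_cong[OF u, of "snd \<circ> snd"]
      by (simp_all add: fst_sum snd_sum h_def)
    then show False
      using annihilate by fastforce
  qed
  then obtain z1 z2 z3 where z: "\<And>i. i < N \<Longrightarrow> inner (z1, z2, z3) (h i) = 0"
    and "inner (z1, z2, z3) (0, 0, 1) \<noteq> 0"
    by (metis orthogonal_witness_if_not_in_span imageI lessThan_iff prod_cases3)
  then have "z3 \<noteq> 0"
    by simp
  define c where "c = - (1 / (2 * z3)) *\<^sub>R z1"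
  have "(dist (q i) c)\<^sup>2 = (norm c)\<^sup>2 - z2 / z3" if "i < N" for i
  proof -
    have "inner z1 (q i) = - z2 - z3 * (norm (q i))\<^sup>2"
      using z[OF that] by (simp add: h_def)
    then have "inner (q i) c = (z2 / z3 + (norm (q i))\<^sup>2) / 2"
      using \<open>z3 \<noteq> 0\<close> by (simp add: c_def inner_commute field_simps)
    then show ?thesis
      by (simp add: dist_norm power2_norm_eq_inner inner_diff inner_commute)
  qed
  then have "\<forall>i<N. dist (q i) c = sqrt ((norm c)\<^sup>2 - z2 / z3)"
    by (metis real_sqrt_unique zero_le_dist)
  then show ?thesis
    by (rule cospherical_if_equidistant[OF inj \<open>2 \<le> N\<close>])
qed

lemma cospherical_if_psd_shift_neg_sqdist:
  fixes q :: "nat \<Rightarrow> 'a::euclidean_space"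
  assumes "inj_on q {..<N}" "2 \<le> N" "psd (smult_mat r (J_mat N) + - sqdist_mat N q)"
  shows "cospherical N q"
  using assms affine_dependency_annihilates_sqnorm_if_psd[OF assms(3)]
  by (intro cospherical_if_affine_dependencies_annihilate_sqnorm) simp_all

theorem lemma3p4:
  fixes E :: "nat \<Rightarrow> nat \<Rightarrow> bool" and k :: real and d :: nat
  assumes "d = DIM('a::euclidean_space)"
    and "simple_graph_on (d+2) E"
    and "representable TYPE('a) (d+2) E k"
  shows "spherical_representable TYPE('a) (d+2) E k \<longleftrightarrow>
     (det (smult_mat [:0, 1:] (J_mat (d+2)) + map_mat (\<lambda>b. [:b:]) (B_mat (d+2) E k)) = 0
      \<and> (\<exists>r0::real. \<forall>r\<ge>r0. psd (smult_mat r (J_mat (d+2)) + B_mat (d+2) E k)))"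
proof
  let ?N = "d + 2"
  assume "spherical_representable TYPE('a) ?N E k"
  then obtain p :: "nat \<Rightarrow> 'a" where p: "two_distance_rep ?N E k p" "cospherical ?N p"
    unfolding spherical_representable_iff by blast
  obtain a where "a > 0" and inj: "inj_on (\<lambda>i. (1/a) *\<^sub>R p i) {..<?N}"
    and B: "B_mat ?N E k = - sqdist_mat ?N (\<lambda>i. (1/a) *\<^sub>R p i)"
    using p(1) by (rule two_distance_rep_normalized)
  have "cospherical ?N (\<lambda>i. (1/a) *\<^sub>R p i)"
    using p(2) \<open>a > 0\<close> by (simp add: cospherical_scaleR_iff)
  moreover have "DIM('a) + 2 \<le> ?N"
    using assms(1) by simp
  moreover have "B_mat ?N E k \<in> carrier_mat ?N ?N"
    by (simp add: B_mat_def)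
  ultimately show "det (smult_mat [:0, 1:] (J_mat ?N) + map_mat (\<lambda>b. [:b:]) (B_mat ?N E k)) = 0
      \<and> (\<exists>r0. \<forall>r\<ge>r0. psd (smult_mat r (J_mat ?N) + B_mat ?N E k))"
    using pencil_conditions_if_cospherical[OF inj] det_pencil_eq_0_iff unfolding B by blast
next
  let ?N = "d + 2"
  assume "det (smult_mat [:0, 1:] (J_mat ?N) + map_mat (\<lambda>b. [:b:]) (B_mat ?N E k)) = 0
      \<and> (\<exists>r0. \<forall>r\<ge>r0. psd (smult_mat r (J_mat ?N) + B_mat ?N E k))"
  then obtain r where psd: "psd (smult_mat r (J_mat ?N) + B_mat ?N E k)"
    by blast
  from assms(3) obtain p :: "nat \<Rightarrow> 'a" where p: "two_distance_rep ?N E k p"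
    unfolding representable_def by blast
  then obtain a where "a > 0" and inj: "inj_on (\<lambda>i. (1/a) *\<^sub>R p i) {..<?N}"
    and B: "B_mat ?N E k = - sqdist_mat ?N (\<lambda>i. (1/a) *\<^sub>R p i)"
    by (rule two_distance_rep_normalized)
  have "cospherical ?N (\<lambda>i. (1/a) *\<^sub>R p i)"
    using cospherical_if_psd_shift_neg_sqdist[OF inj _ psd[unfolded B]] by simp
  then have "cospherical ?N p"
    using \<open>a > 0\<close> by (simp add: cospherical_scaleR_iff)
  then show "spherical_representable TYPE('a) ?N E k"
    unfolding spherical_representable_iff using p by blast
qed

end
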